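(* Consider an instance of additive multislope ski rental with states $0,\dots,k$, buying costs $b_0<b_1<\dots<b_k$ and rental rates $r_0>r_1>\dots>r_k\ge0$, such that $s_1<\dots<s_k$ where $s_i=\frac{b_i-b_{i-1}}{r_{i-1}-r_i}$. Let $c\ge1$. If there exists a $c$-competitive prudent profile, then there exists a $c$-competitive tight profile.
   Context: A profile is a vector $p(t)=(p_0(t),\dots,p_k(t))$ of nonnegative functions of $t\ge0$ with $\sum_ip_i(t)=1$ for all $t$ ($p_i(t)$ = probability of being in state $i$ at time $t$). Define $B_p(t)=\sum_ip_i(t)b_i$, $R_p(t)=\sum_ip_i(t)r_i$, $X_p(t)=B_p(t)+\int_0^tR_p(z)\,dz$ and $\textsc{opt}(t)=\min_i(b_i+r_it)$. A profile is $c$-competitive if $X_p(t)\le c\,\textsc{opt}(t)$ for all $t\ge0$. It is prudent if at every time the set $\{i:p_i(t)>0\}$ is either a single slope or two consecutive slopes. A prudent $c$-competitive profile $p$ is tight if $X_p(t)=c\cdot\textsc{opt}(t)$ for all $t$ with $p_k(t)<1$. *)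

theory Defs
  imports "HOL-Analysis.Analysis"
begin

text \<open>States are 0..k; a profile is p :: nat => real => real with p i t the
probability of being in state i at time t (only t >= 0 and i <= k matter).\<close>

definition Bp :: "nat \<Rightarrow> (nat \<Rightarrow> real) \<Rightarrow> (nat \<Rightarrow> real \<Rightarrow> real) \<Rightarrow> real \<Rightarrow> real" where
  "Bp k b p t = (\<Sum>i\<le>k. p i t * b i)"

definition Rp :: "nat \<Rightarrow> (nat \<Rightarrow> real) \<Rightarrow> (nat \<Rightarrow> real \<Rightarrow> real) \<Rightarrow> real \<Rightarrow> real" where
  "Rp k r p t = (\<Sum>i\<le>k. p i t * r i)"

definition Xp :: "nat \<Rightarrow> (nat \<Rightarrow> real) \<Rightarrow> (nat \<Rightarrow> real) \<Rightarrow> (nat \<Rightarrow> real \<Rightarrow> real) \<Rightarrow> real \<Rightarrow> real" where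
  "Xp k b r p t = Bp k b p t + integral {0..t} (Rp k r p)"

definition opt :: "nat \<Rightarrow> (nat \<Rightarrow> real) \<Rightarrow> (nat \<Rightarrow> real) \<Rightarrow> real \<Rightarrow> real" where
  "opt k b r t = Min ((\<lambda>i. b i + r i * t) ` {..k})"

text \<open>A profile: nonnegative, summing to 1 at every time t >= 0; we also require
the rental-rate function to be integrable on each [0,t] so that X_p is meaningful.\<close>
definition is_profile :: "nat \<Rightarrow> (nat \<Rightarrow> real) \<Rightarrow> (nat \<Rightarrow> real \<Rightarrow> real) \<Rightarrow> bool" where
  "is_profile k r p \<longleftrightarrow>
     (\<forall>t\<ge>0. (\<forall>i\<le>k. 0 \<le> p i t) \<and> (\<Sum>i\<le>k. p i t) = 1) \<and>
     (\<forall>t\<ge>0. Rp k r p integrable_on {0..t})"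

definition competitive :: "nat \<Rightarrow> (nat \<Rightarrow> real) \<Rightarrow> (nat \<Rightarrow> real) \<Rightarrow> real \<Rightarrow> (nat \<Rightarrow> real \<Rightarrow> real) \<Rightarrow> bool" where
  "competitive k b r c p \<longleftrightarrow> is_profile k r p \<and> (\<forall>t\<ge>0. Xp k b r p t \<le> c * opt k b r t)"

definition support :: "nat \<Rightarrow> (nat \<Rightarrow> real \<Rightarrow> real) \<Rightarrow> real \<Rightarrow> nat set" where
  "support k p t = {i. i \<le> k \<and> 0 < p i t}"

definition prudent :: "nat \<Rightarrow> (nat \<Rightarrow> real \<Rightarrow> real) \<Rightarrow> bool" where
  "prudent k p \<longleftrightarrow> (\<forall>t\<ge>0. (\<exists>i\<le>k. support k p t = {i}) \<or>
                              (\<exists>i. i + 1 \<le> k \<and> support k p t = {i, i + 1}))"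

definition tight :: "nat \<Rightarrow> (nat \<Rightarrow> real) \<Rightarrow> (nat \<Rightarrow> real) \<Rightarrow> real \<Rightarrow> (nat \<Rightarrow> real \<Rightarrow> real) \<Rightarrow> bool" where
  "tight k b r c p \<longleftrightarrow> prudent k p \<and> competitive k b r c p \<and>
     (\<forall>t\<ge>0. p k t < 1 \<longrightarrow> Xp k b r p t = c * opt k b r t)"

end

theory Submission
  imports Defs
begin

text \<open>For a prudent profile the rental rate is a function of the buying cost: \<open>R = \<phi>(B)\<close>, where
  \<open>\<phi>\<close> (\<open>min_rate\<close> below) interpolates the points \<open>(b i, r i)\<close> linearly and is decreasing. Writing \<open>I(t)\<close> for the rent
  paid up to time \<open>t\<close>, competitiveness says \<open>B \<le> c\<cdot>opt - I\<close>, hence \<open>I \<ge> T(I)\<close> with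
  \<open>T(I)(t) = \<integral>\<^sub>0\<^sup>t \<phi>(c\<cdot>opt(u) - I(u)) du\<close>. The operator \<open>T\<close> is monotone on the nondecreasing
  functions with rate at most \<open>r 0\<close>, so by a Knaster-Tarski argument the infimum of all such
  prefixed points is a fixed point \<open>J\<close>, and \<open>J \<le> I\<close>. The prudent profile whose buying cost interpolates \<open>min (c\<cdot>opt - J) (b k)\<close>
  then pays rent exactly \<open>J\<close>, so its total cost equals \<open>c\<cdot>opt\<close> until it has moved to state \<open>k\<close>.\<close>

lemma continuous_on_Min_finite:
  fixes f :: "'i \<Rightarrow> 'a::topological_space \<Rightarrow> real"
  assumes "finite A" "A \<noteq> {}" "\<And>i. i \<in> A \<Longrightarrow> continuous_on S (f i)"
  shows "continuous_on S (\<lambda>x. Min ((\<lambda>i. f i x) ` A))"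
  using assms
proof (induction A rule: finite_ne_induct)
  case (insert a A)
  then have "continuous_on S (\<lambda>x. min (f a x) (Min ((\<lambda>i. f i x) ` A)))"
    by (intro continuous_on_min) auto
  with insert.hyps show ?case by simp
qed simp

lemma continuous_on_Max_finite:
  fixes f :: "'i \<Rightarrow> 'a::topological_space \<Rightarrow> real"
  assumes "finite A" "A \<noteq> {}" "\<And>i. i \<in> A \<Longrightarrow> continuous_on S (f i)"
  shows "continuous_on S (\<lambda>x. Max ((\<lambda>i. f i x) ` A))"
  using assms
proof (induction A rule: finite_ne_induct)
  case (insert a A)
  then have "continuous_on S (\<lambda>x. max (f a x) (Max ((\<lambda>i. f i x) ` A)))"
    by (intro continuous_on_max) auto
  with insert.hyps show ?case by simp
qed simp

lemma continuous_on_opt: "continuous_on UNIV (opt k b r)"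
  unfolding opt_def[abs_def] by (intro continuous_on_Min_finite continuous_intros) auto

lemma weighted_mean_bounds:
  fixes w f :: "'i \<Rightarrow> real"
  assumes "\<forall>j\<in>A. 0 \<le> w j" "sum w A = 1" "\<forall>j\<in>A. lo \<le> f j \<and> f j \<le> hi"
  shows "lo \<le> (\<Sum>j\<in>A. w j * f j) \<and> (\<Sum>j\<in>A. w j * f j) \<le> hi"
proof
  have "lo = (\<Sum>j\<in>A. w j * lo)" using assms(2) by (simp add: sum_distrib_right[symmetric])
  also have "\<dots> \<le> (\<Sum>j\<in>A. w j * f j)" using assms by (intro sum_mono mult_left_mono) auto
  finally show "lo \<le> (\<Sum>j\<in>A. w j * f j)" .
  have "(\<Sum>j\<in>A. w j * f j) \<le> (\<Sum>j\<in>A. w j * hi)" using assms by (intro sum_mono mult_left_mono) auto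
  also have "\<dots> = hi" using assms(2) by (simp add: sum_distrib_right[symmetric])
  finally show "(\<Sum>j\<in>A. w j * f j) \<le> hi" .
qed

text \<open>Weights \<open>1 - a\<close> on state \<open>i\<close> and \<open>a\<close> on state \<open>Suc i\<close>; the point mass at the last state \<open>k\<close>
  is \<open>two_point k 0\<close>, whence the side condition \<open>i = k \<Longrightarrow> a = 0\<close> below.\<close>
definition two_point :: "nat \<Rightarrow> real \<Rightarrow> nat \<Rightarrow> real" where
  "two_point i a j = (if j = i then 1 - a else if j = Suc i then a else 0)"

lemma sum_two_point:
  assumes "i \<le> k" "i = k \<Longrightarrow> a = 0"
  shows "(\<Sum>j\<le>k. two_point i a j * f j) = (1 - a) * f i + a * f (Suc i)"
proof (cases "i = k")
  case True
  then have "(\<Sum>j\<le>k. two_point i a j * f j) = (\<Sum>j\<in>{i}. two_point i a j * f j)"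
    by (intro sum.mono_neutral_right) (auto simp: two_point_def)
  with True assms(2) show ?thesis by (simp add: two_point_def)
next
  case False
  then have "(\<Sum>j\<le>k. two_point i a j * f j) = (\<Sum>j\<in>{i, Suc i}. two_point i a j * f j)"
    using assms(1) by (intro sum.mono_neutral_right) (auto simp: two_point_def)
  then show ?thesis by (simp add: two_point_def)
qed

lemma two_point_pos_iff:
  assumes "0 \<le> a" "a < 1"
  shows "0 < two_point i a j \<longleftrightarrow> j = i \<or> (j = Suc i \<and> 0 < a)"
  using assms by (simp add: two_point_def)

lemma two_point_prudent:
  assumes "i \<le> k" "0 \<le> a" "a < 1" "i = k \<Longrightarrow> a = 0"
  shows "(\<forall>j\<le>k. 0 \<le> two_point i a j) \<and> (\<Sum>j\<le>k. two_point i a j) = 1 \<and>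
    ((\<exists>i'\<le>k. {j. j \<le> k \<and> 0 < two_point i a j} = {i'}) \<or>
     (\<exists>i'. i' + 1 \<le> k \<and> {j. j \<le> k \<and> 0 < two_point i a j} = {i', i' + 1}))"
proof (intro conjI)
  show "\<forall>j\<le>k. 0 \<le> two_point i a j" using assms by (simp add: two_point_def)
  show "(\<Sum>j\<le>k. two_point i a j) = 1" using sum_two_point[OF assms(1,4), of "\<lambda>_. 1"] by simp
  show "(\<exists>i'\<le>k. {j. j \<le> k \<and> 0 < two_point i a j} = {i'}) \<or>
     (\<exists>i'. i' + 1 \<le> k \<and> {j. j \<le> k \<and> 0 < two_point i a j} = {i', i' + 1})"
  proof (cases "a = 0")
    case True
    then have "{j. j \<le> k \<and> 0 < two_point i a j} = {i}"
      using assms two_point_pos_iff[OF assms(2,3)] by auto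
    then show ?thesis using assms(1) by blast
  next
    case False
    then have "i < k" "0 < a" using assms by (auto simp: le_less)
    then have "{j. j \<le> k \<and> 0 < two_point i a j} = {i, i + 1}"
      using assms two_point_pos_iff[OF assms(2,3)] by auto
    then show ?thesis using \<open>i < k\<close> by auto
  qed
qed

lemma prudent_weights_two_point:
  fixes p :: "nat \<Rightarrow> real \<Rightarrow> real"
  assumes nonneg: "\<forall>j\<le>k. 0 \<le> p j t" and sum1: "(\<Sum>j\<le>k. p j t) = 1"
    and supp: "(\<exists>i\<le>k. support k p t = {i}) \<or> (\<exists>i. i + 1 \<le> k \<and> support k p t = {i, i + 1})"
  obtains i a where "i \<le> k" "0 \<le> a" "a \<le> 1" "i = k \<Longrightarrow> a = 0" "\<forall>j\<le>k. p j t = two_point i a j"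
proof -
  have zero: "p j t = 0" if "j \<le> k" "j \<notin> support k p t" for j
  proof -
    have "\<not> 0 < p j t" using that by (simp add: support_def)
    with nonneg that(1) show ?thesis by (meson order.antisym not_less)
  qed
  from supp show ?thesis
  proof (elim disjE exE conjE)
    fix i assume i: "i \<le> k" "support k p t = {i}"
    have "(\<Sum>j\<le>k. p j t) = (\<Sum>j\<in>{i}. p j t)"
      by (rule sum.mono_neutral_right) (use i zero in auto)
    then have "p i t = 1" using sum1 by simp
    have "p j t = two_point i 0 j" if "j \<le> k" for j
      using zero[of j] i \<open>p i t = 1\<close> that by (auto simp: two_point_def)
    with i show ?thesis by (intro that) auto
  next
    fix i assume i: "i + 1 \<le> k" "support k p t = {i, i + 1}"
    have "(\<Sum>j\<le>k. p j t) = (\<Sum>j\<in>{i, Suc i}. p j t)"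
      by (rule sum.mono_neutral_right) (use i zero in auto)
    moreover define a where "a = p (Suc i) t"
    ultimately have pi: "p i t = 1 - a" using sum1 by simp
    have "\<forall>j\<le>k. p j t = two_point i a j"
      using zero i pi by (auto simp: two_point_def a_def)
    moreover have "0 \<le> a" "0 \<le> p i t" using nonneg i by (simp_all add: a_def)
    ultimately show ?thesis using i pi by (intro that[of i a]) auto
  qed
qed

definition rate_bounded :: "real \<Rightarrow> (real \<Rightarrow> real) set" where
  "rate_bounded L =
    {I. I 0 = 0 \<and> (\<forall>s t. 0 \<le> s \<and> s \<le> t \<longrightarrow> I s \<le> I t \<and> I t \<le> I s + L * (t - s))}"

lemma rate_boundedD:
  "I \<in> rate_bounded L \<Longrightarrow> 0 \<le> s \<Longrightarrow> s \<le> t \<Longrightarrow> I s \<le> I t \<and> I t \<le> I s + L * (t - s)"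
  unfolding rate_bounded_def by blast

lemma rate_bounded_zero: "I \<in> rate_bounded L \<Longrightarrow> I 0 = 0"
  unfolding rate_bounded_def by blast

lemma rate_bounded_nonneg: "I \<in> rate_bounded L \<Longrightarrow> 0 \<le> t \<Longrightarrow> 0 \<le> I t"
  using rate_boundedD[of I L 0 t] rate_bounded_zero[of I L] by simp

lemma rate_bounded_continuous_on:
  assumes I: "I \<in> rate_bounded L"
  shows "continuous_on {0..} I"
proof -
  have "0 \<le> L"
    using rate_boundedD[OF I, of 0 1] rate_bounded_nonneg[OF I, of 1] rate_bounded_zero[OF I] by simp
  have ordered: "\<bar>I x - I y\<bar> \<le> L * \<bar>x - y\<bar>" if "0 \<le> x" "x \<le> y" for x y
  proof -
    have "I x \<le> I y" "I y \<le> I x + L * (y - x)" using rate_boundedD[OF I that] by auto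
    with that show ?thesis by (simp add: abs_of_nonpos)
  qed
  have "L-lipschitz_on {0..} I"
  proof (rule lipschitz_onI)
    fix x y :: real assume "x \<in> {0..}" "y \<in> {0..}"
    then show "dist (I x) (I y) \<le> L * dist x y"
      using ordered[of x y] ordered[of y x] unfolding dist_real_def
      by (cases "x \<le> y") (auto simp: abs_minus_commute)
  qed fact
  then show ?thesis by (rule lipschitz_on_continuous_on)
qed

lemma integral_in_rate_bounded:
  fixes f :: "real \<Rightarrow> real"
  assumes int: "\<And>t. 0 \<le> t \<Longrightarrow> f integrable_on {0..t}"
    and bounds: "\<And>u. 0 \<le> u \<Longrightarrow> 0 \<le> f u \<and> f u \<le> L"
  shows "(\<lambda>t. integral {0..t} f) \<in> rate_bounded L"
  unfolding rate_bounded_def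
proof (intro CollectI conjI allI impI)
  fix s t :: real assume st: "0 \<le> s \<and> s \<le> t"
  have f0t: "f integrable_on {0..t}" using int st by simp
  have additive: "integral {0..s} f + integral {s..t} f = integral {0..t} f"
    using Henstock_Kurzweil_Integration.integral_combine[OF _ _ f0t, of s] st by simp
  have fst: "f integrable_on {s..t}"
    using integrable_subinterval_real[OF f0t, of s t] st by simp
  have "0 \<le> integral {s..t} f"
    using integral_nonneg[OF fst] bounds st by simp
  then show "integral {0..s} f \<le> integral {0..t} f" using additive by simp
  have "integral {s..t} f \<le> integral {s..t} (\<lambda>_. L)"
    using integral_le[OF fst integrable_const_ivl] bounds st by simp
  then show "integral {0..t} f \<le> integral {0..s} f + L * (t - s)"
    using additive st by (simp add: mult.commute)
qed simp

lemma INF_in_rate_bounded: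
  assumes P: "P \<subseteq> rate_bounded L" "P \<noteq> {}"
  shows "(\<lambda>t. INF I\<in>P. I t) \<in> rate_bounded L"
proof -
  have bdd: "bdd_below ((\<lambda>I. I t) ` P)" if "0 \<le> t" for t
    using rate_bounded_nonneg[of _ L t] P that by (intro bdd_belowI2[where m = 0]) blast
  have lower: "(INF I\<in>P. I t) \<le> I t" if "I \<in> P" "0 \<le> t" for I t
    using bdd that by (intro cINF_lower)
  show ?thesis
    unfolding rate_bounded_def
  proof (intro CollectI conjI allI impI)
    have "(\<lambda>I. I 0) ` P = {0}" using P by (auto simp: rate_bounded_def)
    then show "(INF I\<in>P. I 0) = 0" by simp
    fix s t :: real assume st: "0 \<le> s \<and> s \<le> t"
    show "(INF I\<in>P. I s) \<le> (INF I\<in>P. I t)"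
    proof (rule cINF_greatest)
      fix I assume "I \<in> P"
      then show "(INF I\<in>P. I s) \<le> I t"
        using lower[of I s] rate_boundedD[of I L s t] P st by auto
    qed fact
    have "(INF I\<in>P. I t) - L * (t - s) \<le> (INF I\<in>P. I s)"
    proof (rule cINF_greatest)
      fix I assume "I \<in> P"
      then show "(INF I\<in>P. I t) - L * (t - s) \<le> I s"
        using lower[of I t] rate_boundedD[of I L s t] P st by auto
    qed fact
    then show "(INF I\<in>P. I t) \<le> (INF I\<in>P. I s) + L * (t - s)" by simp
  qed
qed

lemma rate_bounded_fixed_point_below:
  assumes maps: "\<And>I. I \<in> rate_bounded L \<Longrightarrow> F I \<in> rate_bounded L"
    and mono: "\<And>I J. I \<in> rate_bounded L \<Longrightarrow> J \<in> rate_bounded L \<Longrightarrow> \<forall>t\<ge>0. I t \<le> J t \<Longrightarrow>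
      \<forall>t\<ge>0. F I t \<le> F J t"
    and I0: "I0 \<in> rate_bounded L" "\<forall>t\<ge>0. F I0 t \<le> I0 t"
  obtains J where "J \<in> rate_bounded L" "\<forall>t\<ge>0. F J t = J t" "\<forall>t\<ge>0. J t \<le> I0 t"
proof -
  define P where "P = {I \<in> rate_bounded L. \<forall>t\<ge>0. F I t \<le> I t}"
  define J where "J t = (INF I\<in>P. I t)" for t
  have "I0 \<in> P" using I0 by (simp add: P_def)
  then have J: "J \<in> rate_bounded L"
    unfolding J_def by (intro INF_in_rate_bounded) (auto simp: P_def)
  have below: "J t \<le> I t" if "I \<in> P" "0 \<le> t" for I t
    unfolding J_def using that rate_bounded_nonneg[of _ L t]
    by (intro cINF_lower bdd_belowI2[where m = 0]) (auto simp: P_def)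
  have "F J t \<le> J t" if "0 \<le> t" for t
    unfolding J_def[of t]
  proof (rule cINF_greatest)
    fix I assume I: "I \<in> P"
    then have "F J t \<le> F I t" using mono[OF J] below that by (auto simp: P_def)
    also have "\<dots> \<le> I t" using I that by (simp add: P_def)
    finally show "F J t \<le> I t" .
  qed (use \<open>I0 \<in> P\<close> in blast)
  moreover from this have "F J \<in> P" using maps[OF J] mono[OF maps[OF J] J] by (simp add: P_def)
  ultimately have "\<forall>t\<ge>0. F J t = J t" using below by (auto intro: order.antisym)
  with J below \<open>I0 \<in> P\<close> show ?thesis by (intro that) auto
qed

definition rent_integral ::
    "(real \<Rightarrow> real) \<Rightarrow> (real \<Rightarrow> real) \<Rightarrow> (real \<Rightarrow> real) \<Rightarrow> real \<Rightarrow> real" where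
  "rent_integral \<phi> C I t = integral {0..t} (\<lambda>u. \<phi> (C u - I u))"

lemma integrable_rent:
  fixes \<phi> C :: "real \<Rightarrow> real"
  assumes "continuous_on UNIV \<phi>" "continuous_on UNIV C" "I \<in> rate_bounded L"
  shows "(\<lambda>u. \<phi> (C u - I u)) integrable_on {0..t}"
proof -
  have "continuous_on {0..t} (\<lambda>u. C u - I u)"
    using continuous_on_subset[OF rate_bounded_continuous_on[OF assms(3)], of "{0..t}"]
      continuous_on_subset[OF assms(2), of "{0..t}"]
    by (intro continuous_on_diff) auto
  then have "continuous_on {0..t} (\<lambda>u. \<phi> (C u - I u))"
    by (rule continuous_on_compose2[OF assms(1)]) auto
  then show ?thesis by (rule integrable_continuous_real)
qed

lemma rent_integral_in_rate_bounded:
  assumes "continuous_on UNIV \<phi>" "continuous_on UNIV C" "\<And>x. 0 \<le> \<phi> x \<and> \<phi> x \<le> L"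
    and "I \<in> rate_bounded L"
  shows "rent_integral \<phi> C I \<in> rate_bounded L"
  unfolding rent_integral_def[abs_def]
  using assms by (intro integral_in_rate_bounded integrable_rent)

lemma rent_integral_mono:
  assumes "antimono \<phi>" "continuous_on UNIV \<phi>" "continuous_on UNIV C"
    and "I \<in> rate_bounded L" "J \<in> rate_bounded L" "\<forall>t\<ge>0. I t \<le> J t"
  shows "\<forall>t\<ge>0. rent_integral \<phi> C I t \<le> rent_integral \<phi> C J t"
  unfolding rent_integral_def
proof (intro allI impI integral_le)
  fix t u :: real assume "0 \<le> t" "u \<in> {0..t}"
  then have "C u - J u \<le> C u - I u" using assms(6) by auto
  then show "\<phi> (C u - I u) \<le> \<phi> (C u - J u)" by (rule antimonoD[OF assms(1)])
qed (use assms integrable_rent in blast)+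

locale multislope =
  fixes k :: nat and b r :: "nat \<Rightarrow> real"
  assumes b_inc: "\<forall>i<k. b i < b (Suc i)"
    and r_dec: "\<forall>i<k. r (Suc i) < r i"
    and r_nonneg: "0 \<le> r k"
    and s_inc: "\<forall>i. 1 \<le> i \<and> i < k \<longrightarrow>
        (b i - b (i - 1)) / (r (i - 1) - r i) < (b (Suc i) - b i) / (r i - r (Suc i))"
begin

lemma b_mono: "i \<le> j \<Longrightarrow> j \<le> k \<Longrightarrow> b i \<le> b j"
  by (rule lift_Suc_mono_le_ivl[where f = b and N = "{..<k}"]) (use b_inc in auto)

lemma r_antimono: "i \<le> j \<Longrightarrow> j \<le> k \<Longrightarrow> r j \<le> r i"
  by (rule lift_Suc_antimono_le_ivl[where f = r and N = "{..<k}"])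
    (use r_dec in \<open>auto simp: less_imp_le\<close>)

definition slope :: "nat \<Rightarrow> real" where
  "slope j = (r (Suc j) - r j) / (b (Suc j) - b j)"

definition line :: "nat \<Rightarrow> real \<Rightarrow> real" where
  "line j x = (if j < k then r j + slope j * (x - b j) else r k)"

text \<open>The piecewise linear interpolation of the points \<open>(b j, r j)\<close>, constant outside
  \<open>[b 0, b k]\<close>: the rental rate of the prudent distribution with buying cost \<open>x\<close>.
  Since the slopes increase (\<open>s_inc\<close>) it is convex, hence the maximum of its lines.\<close>
definition min_rate :: "real \<Rightarrow> real" where
  "min_rate x = Max ((\<lambda>j. line j (max x (b 0))) ` {..k})"

lemma slope_neg: "j < k \<Longrightarrow> slope j < 0"
  unfolding slope_def using b_inc r_dec by (simp add: divide_neg_pos)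

lemma slope_less:
  assumes "Suc j < k" shows "slope j < slope (Suc j)"
proof -
  define s1 where "s1 = (b (Suc j) - b j) / (r j - r (Suc j))"
  define s2 where "s2 = (b (Suc (Suc j)) - b (Suc j)) / (r (Suc j) - r (Suc (Suc j)))"
  have "0 < s1" "s1 < s2"
    using b_inc r_dec s_inc[rule_format, of "Suc j"] assms unfolding s1_def s2_def by simp_all
  then have "- (1 / s1) < - (1 / s2)" by (simp add: frac_less2)
  moreover have "slope j = - (1 / s1)" "slope (Suc j) = - (1 / s2)"
    unfolding slope_def s1_def s2_def by (simp_all add: divide_simps)
  ultimately show ?thesis by simp
qed

lemma line_at_b: "j \<le> k \<Longrightarrow> line j (b j) = r j"
  unfolding line_def by simp

lemma slope_times_width:
  assumes "j < k" shows "slope j * (b (Suc j) - b j) = r (Suc j) - r j"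
  using b_inc[rule_format, OF assms] unfolding slope_def by simp

lemma line_through_next:
  assumes "j < k" shows "line j x = r (Suc j) + slope j * (x - b (Suc j))"
  using slope_times_width[OF assms] assms unfolding line_def by (simp add: algebra_simps)

lemma line_antimono: "antimono (line j)"
  using slope_neg[of j] by (intro antimonoI) (auto simp: line_def mult_left_mono_neg)

lemma line_Suc_eq:
  "Suc j \<le> k \<Longrightarrow>
    line (Suc j) x = r (Suc j) + (if Suc j < k then slope (Suc j) else 0) * (x - b (Suc j))"
  unfolding line_def by auto

lemma slope_less_next: "Suc j \<le> k \<Longrightarrow> slope j < (if Suc j < k then slope (Suc j) else 0)"
  using slope_less[of j] slope_neg[of j] by auto

text \<open>Consecutive lines cross at \<open>b (Suc j)\<close>, where the slope increases.\<close>
lemma line_le_line_Suc: "Suc j \<le> k \<Longrightarrow> b (Suc j) \<le> x \<Longrightarrow> line j x \<le> line (Suc j) x"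
  using line_through_next[of j x] line_Suc_eq[of j x] slope_less_next[of j]
  by (simp add: mult_right_mono)

lemma line_Suc_le_line: "Suc j \<le> k \<Longrightarrow> x \<le> b (Suc j) \<Longrightarrow> line (Suc j) x \<le> line j x"
  using line_through_next[of j x] line_Suc_eq[of j x] slope_less_next[of j]
  by (simp add: mult_right_mono_neg)

lemma line_le_right:
  assumes "j \<le> i" "i \<le> k" "b i \<le> x"
  shows "line j x \<le> line i x"
proof (rule lift_Suc_mono_le_ivl[where f = "\<lambda>j. line j x"])
  show "{j..<i} \<subseteq> {n. Suc n \<le> k \<and> b (Suc n) \<le> x}"
  proof
    fix n assume "n \<in> {j..<i}"
    then show "n \<in> {n. Suc n \<le> k \<and> b (Suc n) \<le> x}" using assms b_mono[of "Suc n" i] by simp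
  qed
qed (use assms line_le_line_Suc in auto)

lemma line_le_left:
  assumes "i \<le> j" "j \<le> k" "x \<le> b (Suc i)"
  shows "line j x \<le> line i x"
proof (rule lift_Suc_antimono_le_ivl[where f = "\<lambda>j. line j x"])
  show "{i..<j} \<subseteq> {n. Suc n \<le> k \<and> x \<le> b (Suc n)}"
  proof
    fix n assume "n \<in> {i..<j}"
    then show "n \<in> {n. Suc n \<le> k \<and> x \<le> b (Suc n)}" using assms b_mono[of "Suc i" "Suc n"] by simp
  qed
qed (use assms line_Suc_le_line in auto)

lemma min_rate_eq_line:
  assumes "i \<le> k" "b i \<le> x" "i < k \<Longrightarrow> x \<le> b (Suc i)"
  shows "min_rate x = line i x"
proof -
  have "max x (b 0) = x" using b_mono[of 0 i] assms by simp
  moreover have "line j x \<le> line i x" if "j \<le> k" for j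
  proof (cases "j \<le> i")
    case True
    then show ?thesis using line_le_right assms by simp
  next
    case False
    then show ?thesis using line_le_left[of i j x] assms that by simp
  qed
  ultimately show ?thesis unfolding min_rate_def using assms(1) by (intro Max_eqI) auto
qed

lemma min_rate_antimono: "antimono min_rate"
proof (rule antimonoI)
  fix x y :: real assume "x \<le> y"
  have "line j (max y (b 0)) \<le> min_rate x" if "j \<le> k" for j
  proof -
    have "line j (max y (b 0)) \<le> line j (max x (b 0))"
      using \<open>x \<le> y\<close> by (intro antimonoD[OF line_antimono]) simp
    also have "\<dots> \<le> min_rate x" unfolding min_rate_def using that by (intro Max_ge) auto
    finally show ?thesis .
  qed
  then show "min_rate y \<le> min_rate x" unfolding min_rate_def[of y] by (subst Max_le_iff) auto
qed

lemma min_rate_bounds: "r k \<le> min_rate x \<and> min_rate x \<le> r 0"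
proof
  have "line k (max x (b 0)) \<in> (\<lambda>j. line j (max x (b 0))) ` {..k}" by blast
  then show "r k \<le> min_rate x" unfolding min_rate_def by (simp add: line_def)
  have "min_rate x = min_rate (max x (b 0))" by (simp add: min_rate_def)
  also have "\<dots> \<le> min_rate (b 0)" by (rule antimonoD[OF min_rate_antimono]) simp
  also have "\<dots> = line 0 (b 0)" using b_inc by (intro min_rate_eq_line) (auto simp: less_imp_le)
  also have "\<dots> = r 0" by (simp add: line_at_b)
  finally show "min_rate x \<le> r 0" .
qed

lemma continuous_on_min_rate: "continuous_on UNIV min_rate"
proof -
  have "continuous_on UNIV (\<lambda>x. line j (max x (b 0)))" for j
    by (cases "j < k") (auto simp: line_def intro!: continuous_intros)
  then show ?thesis unfolding min_rate_def[abs_def] by (intro continuous_on_Max_finite) auto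
qed

lemma min_rate_interpolation:
  assumes "i \<le> k" "0 \<le> a" "a \<le> 1" "i = k \<Longrightarrow> a = 0"
  shows "min_rate ((1 - a) * b i + a * b (Suc i)) = (1 - a) * r i + a * r (Suc i)"
proof (cases "i = k")
  case True
  then show ?thesis using assms min_rate_eq_line[of k "b k"] line_at_b[of k] by simp
next
  case False
  then have "i < k" using assms(1) by simp
  define x where "x = (1 - a) * b i + a * b (Suc i)"
  have "0 \<le> b (Suc i) - b i" using b_inc \<open>i < k\<close> by (simp add: less_imp_le)
  then have "0 \<le> a * (b (Suc i) - b i)" "0 \<le> (1 - a) * (b (Suc i) - b i)" using assms by simp_all
  then have "b i \<le> x" "x \<le> b (Suc i)" unfolding x_def by (simp_all add: algebra_simps)
  then have "min_rate x = r i + slope i * (a * (b (Suc i) - b i))"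
    using min_rate_eq_line[of i x] \<open>i < k\<close> unfolding line_def x_def by (simp add: algebra_simps)
  also have "\<dots> = r i + a * (r (Suc i) - r i)"
    using slope_times_width[OF \<open>i < k\<close>] by (simp add: mult.left_commute)
  also have "\<dots> = (1 - a) * r i + a * r (Suc i)" by (simp add: algebra_simps)
  finally show ?thesis unfolding x_def .
qed

lemma segment_containing:
  assumes "b 0 \<le> x" "x < b k"
  obtains i where "i < k" "b i \<le> x" "x < b (Suc i)"
proof -
  define A where "A = {i. i \<le> k \<and> b i \<le> x}"
  have fin: "finite A" unfolding A_def by simp
  have "Max A \<in> A" using fin assms(1) unfolding A_def by (intro Max_in) auto
  then have "Max A < k" "b (Max A) \<le> x" using assms(2) unfolding A_def by (auto simp: le_less)
  moreover have "\<not> b (Suc (Max A)) \<le> x"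
  proof
    assume "b (Suc (Max A)) \<le> x"
    then have "Suc (Max A) \<in> A" using \<open>Max A < k\<close> unfolding A_def by simp
    then show False using Max_ge[OF fin] by fastforce
  qed
  ultimately show ?thesis by (intro that) auto
qed

lemma interpolation_exists:
  assumes "b 0 \<le> x"
  obtains i a where "i \<le> k" "0 \<le> a" "a < 1" "i = k \<Longrightarrow> a = 0" "b k \<le> x \<Longrightarrow> i = k"
    "(1 - a) * b i + a * b (Suc i) = min x (b k)" "(1 - a) * r i + a * r (Suc i) = min_rate x"
proof (cases "b k \<le> x")
  case True
  then have "min_rate x = r k" using min_rate_eq_line[of k x] by (simp add: line_def)
  with True show ?thesis by (intro that[of k 0]) auto
next
  case False
  then obtain i where i: "i < k" "b i \<le> x" "x < b (Suc i)"
    using segment_containing assms by (metis not_le)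
  define a where "a = (x - b i) / (b (Suc i) - b i)"
  have "0 \<le> a" "a < 1" using i unfolding a_def by (simp_all add: divide_simps)
  moreover have "(1 - a) * b i + a * b (Suc i) = x"
    using i unfolding a_def by (simp add: divide_simps) (simp add: algebra_simps)
  moreover have "(1 - a) * r i + a * r (Suc i) = min_rate x"
    using min_rate_interpolation[of i a] i calculation by simp
  ultimately show ?thesis using i False by (intro that[of i a]) auto
qed

lemma profile_mean_bounds:
  fixes p :: "nat \<Rightarrow> real \<Rightarrow> real"
  assumes "\<forall>j\<le>k. 0 \<le> p j t" "(\<Sum>j\<le>k. p j t) = 1"
  shows "b 0 \<le> Bp k b p t" "0 \<le> Rp k r p t \<and> Rp k r p t \<le> r 0"
proof -
  have "\<forall>j\<in>{..k}. b 0 \<le> b j \<and> b j \<le> b k" "\<forall>j\<in>{..k}. 0 \<le> r j \<and> r j \<le> r 0"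
    using b_mono r_antimono r_antimono[of _ k] r_nonneg by (auto intro: order.trans)
  then show "b 0 \<le> Bp k b p t" "0 \<le> Rp k r p t \<and> Rp k r p t \<le> r 0"
    using weighted_mean_bounds[of "{..k}" "\<lambda>j. p j t" "b 0" b "b k"]
      weighted_mean_bounds[of "{..k}" "\<lambda>j. p j t" 0 r "r 0"] assms
    unfolding Bp_def Rp_def by auto
qed

lemma min_rate_prudent:
  fixes p :: "nat \<Rightarrow> real \<Rightarrow> real"
  assumes "\<forall>j\<le>k. 0 \<le> p j t" "(\<Sum>j\<le>k. p j t) = 1"
    "(\<exists>i\<le>k. support k p t = {i}) \<or> (\<exists>i. i + 1 \<le> k \<and> support k p t = {i, i + 1})"
  shows "min_rate (Bp k b p t) = Rp k r p t"
proof -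
  obtain i a where ia: "i \<le> k" "0 \<le> a" "a \<le> 1" "i = k \<Longrightarrow> a = 0"
    and p: "\<forall>j\<le>k. p j t = two_point i a j"
    using prudent_weights_two_point[OF assms] by blast
  have "(\<Sum>j\<le>k. p j t * f j) = (1 - a) * f i + a * f (Suc i)" for f
  proof -
    have "(\<Sum>j\<le>k. p j t * f j) = (\<Sum>j\<le>k. two_point i a j * f j)" using p by (intro sum.cong) auto
    then show ?thesis using sum_two_point[OF ia(1,4)] by simp
  qed
  then show ?thesis unfolding Bp_def Rp_def using min_rate_interpolation[OF ia] by simp
qed

lemma interpolating_profile:
  fixes B :: "real \<Rightarrow> real"
  assumes "\<forall>t\<ge>0. b 0 \<le> B t"
  obtains q where "prudent k q" "\<forall>t\<ge>0. (\<forall>j\<le>k. 0 \<le> q j t) \<and> (\<Sum>j\<le>k. q j t) = 1"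
    "\<forall>t\<ge>0. Bp k b q t = min (B t) (b k)" "\<forall>t\<ge>0. Rp k r q t = min_rate (B t)"
    "\<forall>t\<ge>0. q k t < 1 \<longrightarrow> B t < b k"
proof -
  have "\<exists>i a. i \<le> k \<and> 0 \<le> a \<and> a < 1 \<and> (i = k \<longrightarrow> a = 0) \<and> (b k \<le> B t \<longrightarrow> i = k) \<and>
      (1 - a) * b i + a * b (Suc i) = min (B t) (b k) \<and> (1 - a) * r i + a * r (Suc i) = min_rate (B t)"
    if "0 \<le> t" for t
    by (rule interpolation_exists[of "B t"]) (use assms that in auto)
  then obtain \<sigma> \<alpha> where \<sigma>\<alpha>: "\<And>t. 0 \<le> t \<Longrightarrow> \<sigma> t \<le> k \<and> 0 \<le> \<alpha> t \<and> \<alpha> t < 1 \<and>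
      (\<sigma> t = k \<longrightarrow> \<alpha> t = 0) \<and> (b k \<le> B t \<longrightarrow> \<sigma> t = k) \<and>
      (1 - \<alpha> t) * b (\<sigma> t) + \<alpha> t * b (Suc (\<sigma> t)) = min (B t) (b k) \<and>
      (1 - \<alpha> t) * r (\<sigma> t) + \<alpha> t * r (Suc (\<sigma> t)) = min_rate (B t)"
    by metis
  define q where "q j t = two_point (\<sigma> t) (\<alpha> t) j" for j t
  have distribution: "(\<forall>j\<le>k. 0 \<le> q j t) \<and> (\<Sum>j\<le>k. q j t) = 1 \<and>
      ((\<exists>i\<le>k. support k q t = {i}) \<or> (\<exists>i. i + 1 \<le> k \<and> support k q t = {i, i + 1}))"
    if "0 \<le> t" for t
    using two_point_prudent[of "\<sigma> t" k "\<alpha> t"] \<sigma>\<alpha>[OF that] unfolding q_def support_def by blast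
  have "Bp k b q t = min (B t) (b k) \<and> Rp k r q t = min_rate (B t)" if "0 \<le> t" for t
    using \<sigma>\<alpha>[OF that] sum_two_point[of "\<sigma> t" k "\<alpha> t"] unfolding Bp_def Rp_def q_def by simp
  moreover have "q k t < 1 \<longrightarrow> B t < b k" if "0 \<le> t" for t
    using \<sigma>\<alpha>[OF that] unfolding q_def two_point_def by auto
  moreover have "prudent k q" unfolding prudent_def using distribution by blast
  ultimately show ?thesis using distribution by (intro that[of q]) auto
qed

lemma competitive_prefixed_point:
  assumes prudent: "prudent k p" and competitive: "competitive k b r c p"
  defines "I \<equiv> \<lambda>t. integral {0..t} (Rp k r p)"
  shows "I \<in> rate_bounded (r 0)"
    and "\<forall>t\<ge>0. rent_integral min_rate (\<lambda>t. c * opt k b r t) I t \<le> I t"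
    and "\<forall>t\<ge>0. b 0 \<le> c * opt k b r t - I t"
proof -
  have distribution: "(\<forall>j\<le>k. 0 \<le> p j t) \<and> (\<Sum>j\<le>k. p j t) = 1" if "0 \<le> t" for t
    using competitive that unfolding competitive_def is_profile_def by blast
  have int: "Rp k r p integrable_on {0..t}" if "0 \<le> t" for t
    using competitive that unfolding competitive_def is_profile_def by blast
  have cost: "Bp k b p t \<le> c * opt k b r t - I t" if "0 \<le> t" for t
    using competitive that unfolding competitive_def Xp_def I_def by (simp add: le_diff_eq)
  show I: "I \<in> rate_bounded (r 0)"
    unfolding I_def using int distribution profile_mean_bounds by (intro integral_in_rate_bounded) auto
  show "\<forall>t\<ge>0. rent_integral min_rate (\<lambda>t. c * opt k b r t) I t \<le> I t"
    unfolding rent_integral_def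
  proof (intro allI impI)
    fix t :: real assume "0 \<le> t"
    have "integral {0..t} (\<lambda>u. min_rate (c * opt k b r u - I u)) \<le> integral {0..t} (Rp k r p)"
    proof (rule integral_le)
      show "(\<lambda>u. min_rate (c * opt k b r u - I u)) integrable_on {0..t}"
        using continuous_on_min_rate continuous_on_opt I by (intro integrable_rent continuous_intros)
      fix u assume "u \<in> {0..t}"
      then have "min_rate (c * opt k b r u - I u) \<le> min_rate (Bp k b p u)"
        using cost by (intro antimonoD[OF min_rate_antimono]) auto
      also have "\<dots> = Rp k r p u"
        using \<open>u \<in> {0..t}\<close> distribution prudent unfolding prudent_def by (intro min_rate_prudent) auto
      finally show "min_rate (c * opt k b r u - I u) \<le> Rp k r p u" .
    qed (use int \<open>0 \<le> t\<close> in simp)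
    then show "integral {0..t} (\<lambda>u. min_rate (c * opt k b r u - I u)) \<le> I t" by (simp add: I_def)
  qed
  show "\<forall>t\<ge>0. b 0 \<le> c * opt k b r t - I t"
    using distribution profile_mean_bounds cost by (meson order.trans)
qed

lemma tight_from_fixed_point:
  assumes J: "J \<in> rate_bounded (r 0)"
    and fixed: "\<forall>t\<ge>0. rent_integral min_rate (\<lambda>t. c * opt k b r t) J t = J t"
    and above: "\<forall>t\<ge>0. b 0 \<le> c * opt k b r t - J t"
  shows "\<exists>q. tight k b r c q"
proof -
  define B where "B t = c * opt k b r t - J t" for t
  obtain q where prudent: "prudent k q"
    and distribution: "\<forall>t\<ge>0. (\<forall>j\<le>k. 0 \<le> q j t) \<and> (\<Sum>j\<le>k. q j t) = 1"
    and Bq: "\<forall>t\<ge>0. Bp k b q t = min (B t) (b k)" and Rq: "\<forall>t\<ge>0. Rp k r q t = min_rate (B t)"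
    and bought: "\<forall>t\<ge>0. q k t < 1 \<longrightarrow> B t < b k"
    using interpolating_profile[of B] above unfolding B_def by blast
  have rent: "(\<lambda>u. min_rate (B u)) integrable_on {0..t}" for t
    unfolding B_def using continuous_on_min_rate continuous_on_opt J
    by (intro integrable_rent continuous_intros)
  have Rq_int: "Rp k r q integrable_on {0..t} \<and> integral {0..t} (Rp k r q) = J t" if "0 \<le> t" for t
  proof -
    have "integral {0..t} (Rp k r q) = integral {0..t} (\<lambda>u. min_rate (B u))"
      using Rq by (intro Henstock_Kurzweil_Integration.integral_cong) auto
    moreover have "Rp k r q integrable_on {0..t}"
      using rent Rq Henstock_Kurzweil_Integration.integrable_cong[of "{0..t}" "Rp k r q"] by auto
    ultimately show ?thesis using fixed that unfolding rent_integral_def B_def by simp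
  qed
  have X: "Xp k b r q t = min (B t) (b k) + J t" if "0 \<le> t" for t
    unfolding Xp_def using Bq Rq_int that by simp
  have "is_profile k r q" unfolding is_profile_def using distribution Rq_int by blast
  moreover have "\<forall>t\<ge>0. Xp k b r q t \<le> c * opt k b r t" using X unfolding B_def by (simp add: min_def)
  moreover have "\<forall>t\<ge>0. q k t < 1 \<longrightarrow> Xp k b r q t = c * opt k b r t"
    using X bought unfolding B_def by simp
  ultimately have "tight k b r c q" using prudent unfolding tight_def competitive_def by blast
  then show ?thesis by blast
qed

end

theorem lemma4p5:
  fixes k :: nat and b r :: "nat \<Rightarrow> real" and c :: real
  assumes b_nonneg: "0 \<le> b 0"
    and b_inc: "\<forall>i<k. b i < b (Suc i)"
    and r_dec: "\<forall>i<k. r (Suc i) < r i"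
    and r_nonneg: "0 \<le> r k"
    and s_inc: "\<forall>i. 1 \<le> i \<and> i < k \<longrightarrow>
        (b i - b (i - 1)) / (r (i - 1) - r i) < (b (Suc i) - b i) / (r i - r (Suc i))"
    and c_ge: "1 \<le> c"
    and ex: "\<exists>p. prudent k p \<and> competitive k b r c p"
  shows "\<exists>q. tight k b r c q"
proof -
  interpret multislope k b r
    using b_inc r_dec r_nonneg s_inc by unfold_locales
  define F where "F = rent_integral min_rate (\<lambda>t. c * opt k b r t)"
  from ex obtain p where "prudent k p" "competitive k b r c p" by blast
  from competitive_prefixed_point[OF this] obtain I where I: "I \<in> rate_bounded (r 0)"
    "\<forall>t\<ge>0. F I t \<le> I t" "\<forall>t\<ge>0. b 0 \<le> c * opt k b r t - I t"
    unfolding F_def by blast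
  have "F J \<in> rate_bounded (r 0)" if "J \<in> rate_bounded (r 0)" for J
    unfolding F_def using that continuous_on_min_rate continuous_on_opt min_rate_bounds r_nonneg
    by (intro rent_integral_in_rate_bounded continuous_intros) (auto intro: order.trans)
  moreover have "\<forall>t\<ge>0. F J t \<le> F J' t"
    if "J \<in> rate_bounded (r 0)" "J' \<in> rate_bounded (r 0)" "\<forall>t\<ge>0. J t \<le> J' t" for J J'
    unfolding F_def using that min_rate_antimono continuous_on_min_rate continuous_on_opt
    by (intro rent_integral_mono continuous_intros)
  ultimately obtain J where "J \<in> rate_bounded (r 0)" "\<forall>t\<ge>0. F J t = J t" "\<forall>t\<ge>0. J t \<le> I t"
    using rate_bounded_fixed_point_below I(1,2) by blast
  moreover from this(3) I(3) have "\<forall>t\<ge>0. b 0 \<le> c * opt k b r t - J t" by fastforce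
  ultimately show ?thesis unfolding F_def by (intro tight_from_fixed_point)
qed

end
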